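(* Let $\mathcal G$ be the graph defined below, and suppose $(<,\{S,Q\})$ is a mixed $1$-stack $1$-queue layout of $\mathcal G$ in which $v_1<s<t<v_2$ for some edge $(v_1,v_2)\in Q$ and some pair of twins $s,t$. Then: (a) there are three connectors $x_1,x_2,x_3\in C_{s,t}$ that either all satisfy $x_j>v_2$ or all satisfy $x_j<v_1$; (b) for any such three connectors $x_1,x_2,x_3$, there is some $i\in\{1,2,3\}$ such that one of the edges $(s,x_i),(t,x_i)$ lies in $S$ and the other lies in $Q$.
   Context: Graph $\mathcal G$: take two vertices $A,B$ and $19$ copies of a gadget $H$, identified at $A$ and $B$. Each copy of $H$ consists of two further vertices $s,t$ (called twins) joined by the twin edge $(s,t)$, the edges $(A,s),(A,t),(B,s),(B,t)$, and seven further vertices $x_1,\dots,x_7$ (called connectors), each of degree $2$ and adjacent to exactly $s$ and $t$; the set of these seven connectors is denoted $C_{s,t}$. ($A$ and $B$ are not adjacent; $\mathcal G$ has $173$ vertices and $361$ edges.) For a vertex ordering $<$ and an edge $e$, let $L(e)<R(e)$ be its endpoints; edges $e,f$ cross if $L(e)<L(f)<R(e)<R(f)$ and nest if $L(e)<L(f)<R(f)<R(e)$. A stack is an edge set with no two crossing edges, a queue an edge set with no two nested edges. A mixed $1$-stack $1$-queue layout is a vertex ordering $<$ together with a partition of the edge set into a stack $S$ and a queue $Q$. *)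

theory Defs
  imports Main
begin

text \<open>Vertices of the graph G: A, B, and for each copy i < 19 of the gadget H
  the twins Tw1 i, Tw2 i and the connectors Con i j (j < 7).\<close>
datatype gv = VA | VB | Tw1 nat | Tw2 nat | Con nat nat

definition G_V :: "gv set" where
  "G_V = {VA, VB} \<union> {Tw1 i | i. i < 19} \<union> {Tw2 i | i. i < 19}
         \<union> {Con i j | i j. i < 19 \<and> j < 7}"

definition G_E :: "gv set set" where
  "G_E = {{Tw1 i, Tw2 i} | i. i < 19}
       \<union> {{a, Tw1 i} | a i. a \<in> {VA, VB} \<and> i < 19}
       \<union> {{a, Tw2 i} | a i. a \<in> {VA, VB} \<and> i < 19}
       \<union> {{Tw1 i, Con i j} | i j. i < 19 \<and> j < 7}
       \<union> {{Tw2 i, Con i j} | i j. i < 19 \<and> j < 7}"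

definition connectors :: "nat \<Rightarrow> gv set" where
  "connectors i = {Con i j | j. j < 7}"

text \<open>A vertex ordering is given by an injective position map pos on G_V
  (u < v iff pos u < pos v).\<close>
definition crosses :: "(gv \<Rightarrow> nat) \<Rightarrow> gv set \<Rightarrow> gv set \<Rightarrow> bool" where
  "crosses pos e f \<longleftrightarrow> (\<exists>a b c d. e = {a, b} \<and> f = {c, d} \<and>
      pos a < pos c \<and> pos c < pos b \<and> pos b < pos d)"

definition nests :: "(gv \<Rightarrow> nat) \<Rightarrow> gv set \<Rightarrow> gv set \<Rightarrow> bool" where
  "nests pos e f \<longleftrightarrow> (\<exists>a b c d. e = {a, b} \<and> f = {c, d} \<and>
      pos a < pos c \<and> pos c < pos d \<and> pos d < pos b)"

definition is_stack :: "(gv \<Rightarrow> nat) \<Rightarrow> gv set set \<Rightarrow> bool" where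
  "is_stack pos S \<longleftrightarrow> (\<forall>e\<in>S. \<forall>f\<in>S. \<not> crosses pos e f)"

definition is_queue :: "(gv \<Rightarrow> nat) \<Rightarrow> gv set set \<Rightarrow> bool" where
  "is_queue pos Q \<longleftrightarrow> (\<forall>e\<in>Q. \<forall>f\<in>Q. \<not> nests pos e f)"

definition mixed_1s1q_layout :: "(gv \<Rightarrow> nat) \<Rightarrow> gv set set \<Rightarrow> gv set set \<Rightarrow> bool" where
  "mixed_1s1q_layout pos S Q \<longleftrightarrow> inj_on pos G_V \<and> S \<union> Q = G_E \<and> S \<inter> Q = {}
      \<and> is_stack pos S \<and> is_queue pos Q"

end

(* Inside a queue edge (v1, v2), an edge between two vertices under it would be nested, so
   the connectors under it send both their twin edges to the stack; as K_{2,3} has no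
   one-page book embedding, at most two of the seven connectors lie there, and three of the
   remaining five lie on a common side. Two connectors on a common side of s < t whose twin
   edges all lie on one page produce a crossing in the stack or a nesting in the queue, so
   among three of them some connector has one twin edge on each page. *)
theory Submission
  imports Defs
begin

lemma is_stackD:
  assumes "is_stack pos S" "{a, b} \<in> S" "{c, d} \<in> S"
  shows "\<not> (pos a < pos c \<and> pos c < pos b \<and> pos b < pos d)"
  using assms unfolding is_stack_def crosses_def by blast

lemma is_queueD:
  assumes "is_queue pos Q" "{a, b} \<in> Q" "{c, d} \<in> Q"
  shows "\<not> (pos a < pos c \<and> pos c < pos d \<and> pos d < pos b)"
  using assms unfolding is_queue_def nests_def by blast

lemma queue_no_edge_nested:
  assumes Q: "is_queue pos Q" and "{v1, v2} \<in> Q"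
    and "pos v1 < pos a" "pos a < pos v2" "pos v1 < pos b" "pos b < pos v2" "pos a \<noteq> pos b"
  shows "{a, b} \<notin> Q"
  using is_queueD[OF Q \<open>{v1, v2} \<in> Q\<close>, of a b] is_queueD[OF Q \<open>{v1, v2} \<in> Q\<close>, of b a] assms(3-7)
  by (auto simp: insert_commute)

lemma stack_common_neighbours_separated:
  assumes S: "is_stack pos S"
    and sx: "{s, x} \<in> S" and tx: "{t, x} \<in> S" and sy: "{s, y} \<in> S" and ty: "{t, y} \<in> S"
    and "pos s < pos t" "pos x < pos y" "pos x \<notin> {pos s, pos t}" "pos y \<notin> {pos s, pos t}"
  shows "(pos s < pos x \<and> pos x < pos t) \<longleftrightarrow> \<not> (pos s < pos y \<and> pos y < pos t)"
proof -
  have "{x, s} \<in> S" "{x, t} \<in> S" "{y, t} \<in> S"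
    using sx tx ty by (simp_all add: insert_commute)
  then have "\<not> pos t < pos x" "\<not> pos y < pos s"
    "\<not> (pos x < pos s \<and> pos t < pos y)" "\<not> (pos s < pos x \<and> pos y < pos t)"
    using is_stackD[OF S sx ty] is_stackD[OF S \<open>{x, s} \<in> S\<close> \<open>{y, t} \<in> S\<close>]
      is_stackD[OF S \<open>{x, t} \<in> S\<close> sy] is_stackD[OF S sy \<open>{x, t} \<in> S\<close>] assms(6-7)
    by auto
  then show ?thesis
    using assms(6-9) by auto
qed

lemma stack_same_side_neighbours:
  assumes S: "is_stack pos S" and "{s, x} \<in> S" "{t, y} \<in> S"
    and "pos s < pos t" "pos x < pos y" "pos t < pos x \<or> pos y < pos s"
  shows False
proof -
  have "{x, s} \<in> S" "{y, t} \<in> S"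
    using assms(2,3) by (simp_all add: insert_commute)
  then show False
    using is_stackD[OF S assms(2,3)] is_stackD[OF S \<open>{x, s} \<in> S\<close> \<open>{y, t} \<in> S\<close>] assms(4-6)
    by linarith
qed

lemma queue_same_side_neighbours:
  assumes Q: "is_queue pos Q" and "{s, y} \<in> Q" "{t, x} \<in> Q"
    and "pos s < pos t" "pos x < pos y" "pos t < pos x \<or> pos y < pos s"
  shows False
proof -
  have "{x, t} \<in> Q" "{y, s} \<in> Q"
    using assms(2,3) by (simp_all add: insert_commute)
  then show False
    using is_queueD[OF Q assms(2,3)] is_queueD[OF Q \<open>{x, t} \<in> Q\<close> \<open>{y, s} \<in> Q\<close>] assms(4-6)
    by linarith
qed

text \<open>No stack holds a \<open>K\<^sub>2\<^sub>,\<^sub>3\<close>: of any two common neighbours of \<open>s\<close> and \<open>t\<close>,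
  exactly one lies between them.\<close>
lemma stack_common_neighbours_card_le_2:
  assumes S: "is_stack pos S" and st: "pos s < pos t" and "finite M" and inj: "inj_on pos M"
    and M: "\<And>x. x \<in> M \<Longrightarrow> {s, x} \<in> S \<and> {t, x} \<in> S \<and> pos x \<notin> {pos s, pos t}"
  shows "card M \<le> 2"
proof -
  define I where "I = {x \<in> M. pos s < pos x \<and> pos x < pos t}"
  have ordered: "x \<in> I \<longleftrightarrow> y \<notin> I" if "x \<in> M" "y \<in> M" "pos x < pos y" for x y
    using stack_common_neighbours_separated[OF S _ _ _ _ st that(3)] M[OF that(1)] M[OF that(2)] that(1,2)
    unfolding I_def by blast
  have separated: "x \<in> I \<longleftrightarrow> y \<notin> I" if "x \<in> M" "y \<in> M" "x \<noteq> y" for x y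
  proof -
    have "pos x \<noteq> pos y"
      using inj that by (auto dest: inj_onD)
    then show ?thesis
      using ordered[of x y] ordered[of y x] that by (meson linorder_neqE_nat)
  qed
  have "card I \<le> 1" "card (M - I) \<le> 1"
    using separated \<open>finite M\<close> by (auto simp: card_le_Suc0_iff_eq I_def)
  moreover have "card M \<le> card I + card (M - I)"
    using card_Un_le[of I "M - I"] by (simp add: I_def Un_absorb1)
  ultimately show ?thesis
    by linarith
qed

lemma connectors_eq: "connectors i = Con i ` {..<7}"
  unfolding connectors_def by auto

lemma card_connectors: "card (connectors i) = 7"
  unfolding connectors_eq by (simp add: card_image inj_on_def)

lemma connectors_subset_G_V: "i < 19 \<Longrightarrow> connectors i \<subseteq> G_V"
  unfolding connectors_def G_V_def by auto

lemma twins_in_G_V: "i < 19 \<Longrightarrow> {Tw1 i, Tw2 i} \<subseteq> G_V"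
  unfolding G_V_def by auto

lemma twin_connector_edge:
  "i < 19 \<Longrightarrow> s \<in> {Tw1 i, Tw2 i} \<Longrightarrow> x \<in> connectors i \<Longrightarrow> {s, x} \<in> G_E"
  unfolding G_E_def connectors_def by auto

lemma connector_edge_other_end:
  "x \<in> connectors i \<Longrightarrow> {x, w} \<in> G_E \<Longrightarrow> w \<in> {Tw1 i, Tw2 i}"
  unfolding G_E_def connectors_def by (auto simp: doubleton_eq_iff)

lemma edge_subset_G_V: "e \<in> G_E \<Longrightarrow> e \<subseteq> G_V"
  unfolding G_E_def G_V_def by auto

lemma layout_pos_eq_iff:
  "mixed_1s1q_layout pos S Q \<Longrightarrow> u \<in> G_V \<Longrightarrow> v \<in> G_V \<Longrightarrow> pos u = pos v \<longleftrightarrow> u = v"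
  unfolding mixed_1s1q_layout_def by (auto dest: inj_onD)

lemma twin_connector_edges_in_layout:
  assumes L: "mixed_1s1q_layout pos S Q" and "i < 19" and st: "{s, t} = {Tw1 i, Tw2 i}"
    and x: "x \<in> connectors i"
  shows "{s, x} \<in> S \<union> Q" "{t, x} \<in> S \<union> Q" "pos x \<notin> {pos s, pos t}"
proof -
  have "S \<union> Q = G_E"
    using L unfolding mixed_1s1q_layout_def by blast
  then show "{s, x} \<in> S \<union> Q" "{t, x} \<in> S \<union> Q"
    using twin_connector_edge[OF \<open>i < 19\<close> _ x] st by (auto simp: doubleton_eq_iff)
  have "x \<notin> {s, t}"
    using x st unfolding connectors_def by (auto simp: doubleton_eq_iff)
  moreover have "x \<in> G_V" "s \<in> G_V" "t \<in> G_V"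
    using connectors_subset_G_V twins_in_G_V \<open>i < 19\<close> x st by blast+
  ultimately show "pos x \<notin> {pos s, pos t}"
    using layout_pos_eq_iff[OF L] by auto
qed

lemma connector_with_mixed_twin_edges:
  assumes L: "mixed_1s1q_layout pos S Q" and "i < 19" and st: "{s, t} = {Tw1 i, Tw2 i}"
    and "pos s < pos t"
    and X: "x1 \<in> connectors i" "x2 \<in> connectors i" "x3 \<in> connectors i"
      "x1 \<noteq> x2" "x1 \<noteq> x3" "x2 \<noteq> x3"
    and side: "(pos t < pos x1 \<and> pos t < pos x2 \<and> pos t < pos x3)
      \<or> (pos x1 < pos s \<and> pos x2 < pos s \<and> pos x3 < pos s)"
  shows "\<exists>x\<in>{x1, x2, x3}. ({s, x} \<in> S \<and> {t, x} \<in> Q) \<or> ({s, x} \<in> Q \<and> {t, x} \<in> S)"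
proof (rule ccontr)
  assume none_mixed: "\<not> ?thesis"
  have S: "is_stack pos S" and Q: "is_queue pos Q" and disj: "S \<inter> Q = {}"
    using L unfolding mixed_1s1q_layout_def by blast+
  have uniform: "({s, x} \<in> S \<and> {t, x} \<in> S) \<or> ({s, x} \<in> Q \<and> {t, x} \<in> Q)"
    if "x \<in> {x1, x2, x3}" for x
  proof -
    have "x \<in> connectors i"
      using X that by blast
    then show ?thesis
      using twin_connector_edges_in_layout[OF L \<open>i < 19\<close> st] none_mixed that by blast
  qed
  have differ: "{s, x} \<in> S \<longleftrightarrow> {s, y} \<notin> S"
    if x: "x \<in> {x1, x2, x3}" and y: "y \<in> {x1, x2, x3}" and "pos x < pos y" for x y
  proof
    have "pos t < pos x \<or> pos y < pos s"
      using side x y by auto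
    note same_side = \<open>pos s < pos t\<close> \<open>pos x < pos y\<close> this
    show "{s, y} \<notin> S" if "{s, x} \<in> S"
    proof
      assume "{s, y} \<in> S"
      then have "{t, y} \<in> S"
        using uniform[OF y] disj by blast
      then show False
        using stack_same_side_neighbours[OF S \<open>{s, x} \<in> S\<close> _ same_side] by blast
    qed
    show "{s, x} \<in> S" if "{s, y} \<notin> S"
    proof (rule ccontr)
      assume "{s, x} \<notin> S"
      then have "{s, y} \<in> Q" "{t, x} \<in> Q"
        using uniform[OF x] uniform[OF y] \<open>{s, y} \<notin> S\<close> by blast+
      then show False
        using queue_same_side_neighbours[OF Q _ _ same_side] by blast
    qed
  qed
  have "pos x \<noteq> pos y" if "x \<in> {x1, x2, x3}" "y \<in> {x1, x2, x3}" "x \<noteq> y" for x y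
    using layout_pos_eq_iff[OF L] connectors_subset_G_V[OF \<open>i < 19\<close>] X that by blast
  then have "{s, x} \<in> S \<longleftrightarrow> {s, y} \<notin> S" if "x \<in> {x1, x2, x3}" "y \<in> {x1, x2, x3}" "x \<noteq> y" for x y
    using differ[of x y] differ[of y x] that by (meson linorder_neqE_nat)
  from this[of x1 x2] this[of x1 x3] this[of x2 x3] show False
    using X(4-6) by auto
qed

lemma three_distinct_elements:
  assumes "3 \<le> card A"
  obtains a b c where "a \<in> A" "b \<in> A" "c \<in> A" "a \<noteq> b" "a \<noteq> c" "b \<noteq> c"
proof -
  obtain T where "T \<subseteq> A" "card T = 3"
    using obtain_subset_with_card_n[OF assms] by blast
  then show ?thesis
    using that by (auto simp: card_3_iff)
qed

lemma three_connectors_beyond_queue_edge: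
  assumes L: "mixed_1s1q_layout pos S Q" and v: "{v1, v2} \<in> Q"
    and "i < 19" and st: "{s, t} = {Tw1 i, Tw2 i}"
    and "pos v1 < pos s" "pos s < pos t" "pos t < pos v2"
  shows "\<exists>x1 x2 x3. x1 \<in> connectors i \<and> x2 \<in> connectors i \<and> x3 \<in> connectors i
            \<and> x1 \<noteq> x2 \<and> x1 \<noteq> x3 \<and> x2 \<noteq> x3
            \<and> ((pos v2 < pos x1 \<and> pos v2 < pos x2 \<and> pos v2 < pos x3)
               \<or> (pos x1 < pos v1 \<and> pos x2 < pos v1 \<and> pos x3 < pos v1))"
proof -
  have S: "is_stack pos S" and Q: "is_queue pos Q" and inj: "inj_on pos G_V"
    and E: "S \<union> Q = G_E"
    using L unfolding mixed_1s1q_layout_def by blast+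
  define C where "C = connectors i"
  define Cl where "Cl = {x \<in> C. pos x < pos v1}"
  define Cm where "Cm = {x \<in> C. pos v1 < pos x \<and> pos x < pos v2}"
  define Cr where "Cr = {x \<in> C. pos v2 < pos x}"
  have C_V: "C \<subseteq> G_V"
    using connectors_subset_G_V[OF \<open>i < 19\<close>] unfolding C_def .
  have "pos x \<noteq> pos v1" "pos x \<noteq> pos v2" if "x \<in> C" for x
  proof -
    have "v1 \<notin> {s, t}" "v2 \<notin> {s, t}"
      using assms(5-7) by auto
    then have "{x, v2} \<notin> G_E" "{x, v1} \<notin> G_E"
      using connector_edge_other_end[of x i] that unfolding C_def st by blast+
    moreover have "{v1, v2} \<in> G_E" "{v2, v1} \<in> G_E"
      using v E by (auto simp: insert_commute[of v1 v2])
    ultimately have "x \<noteq> v1" "x \<noteq> v2"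
      by blast+
    moreover have "v1 \<in> G_V" "v2 \<in> G_V"
      using edge_subset_G_V v E by blast+
    ultimately show "pos x \<noteq> pos v1" "pos x \<noteq> pos v2"
      using layout_pos_eq_iff[OF L] C_V that by auto
  qed
  then have "C \<subseteq> Cl \<union> Cm \<union> Cr"
    unfolding Cl_def Cm_def Cr_def by fastforce
  then have "7 \<le> card Cl + card Cm + card Cr"
    using card_connectors[of i] card_mono[of "Cl \<union> Cm \<union> Cr" C] card_Un_le[of "Cl \<union> Cm" Cr]
      card_Un_le[of Cl Cm]
    unfolding C_def Cl_def Cm_def Cr_def by (simp add: connectors_eq)
  moreover have "card Cm \<le> 2"
  proof (rule stack_common_neighbours_card_le_2[OF S \<open>pos s < pos t\<close>])
    show "finite Cm" "inj_on pos Cm"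
      using inj C_V unfolding Cm_def C_def connectors_eq by (auto intro: inj_on_subset)
    fix x assume "x \<in> Cm"
    then have x: "x \<in> connectors i" "pos v1 < pos x" "pos x < pos v2"
      unfolding Cm_def C_def by auto
    note edges = twin_connector_edges_in_layout[OF L \<open>i < 19\<close> st x(1)]
    have "{s, x} \<notin> Q" "{t, x} \<notin> Q"
      using queue_no_edge_nested[OF Q v] x edges(3) assms(5-7) by auto
    then show "{s, x} \<in> S \<and> {t, x} \<in> S \<and> pos x \<notin> {pos s, pos t}"
      using edges by blast
  qed
  ultimately consider "3 \<le> card Cl" | "3 \<le> card Cr"
    by linarith
  then show ?thesis
  proof cases
    case 1
    then show ?thesis
      by (rule three_distinct_elements) (auto simp: Cl_def C_def)
  next
    case 2
    then show ?thesis
      by (rule three_distinct_elements) (auto simp: Cr_def C_def)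
  qed
qed

theorem lemma1:
  fixes pos :: "gv \<Rightarrow> nat" and S Q :: "gv set set" and v1 v2 s t :: gv and i :: nat
  assumes "mixed_1s1q_layout pos S Q"
    and "{v1, v2} \<in> Q"
    and "i < 19" and "{s, t} = {Tw1 i, Tw2 i}"
    and "pos v1 < pos s" and "pos s < pos t" and "pos t < pos v2"
  shows "(\<exists>x1 x2 x3. x1 \<in> connectors i \<and> x2 \<in> connectors i \<and> x3 \<in> connectors i
            \<and> x1 \<noteq> x2 \<and> x1 \<noteq> x3 \<and> x2 \<noteq> x3
            \<and> ((pos v2 < pos x1 \<and> pos v2 < pos x2 \<and> pos v2 < pos x3)
               \<or> (pos x1 < pos v1 \<and> pos x2 < pos v1 \<and> pos x3 < pos v1)))
       \<and> (\<forall>x1 x2 x3. x1 \<in> connectors i \<and> x2 \<in> connectors i \<and> x3 \<in> connectors i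
            \<and> x1 \<noteq> x2 \<and> x1 \<noteq> x3 \<and> x2 \<noteq> x3
            \<and> ((pos v2 < pos x1 \<and> pos v2 < pos x2 \<and> pos v2 < pos x3)
               \<or> (pos x1 < pos v1 \<and> pos x2 < pos v1 \<and> pos x3 < pos v1))
            \<longrightarrow> (\<exists>x\<in>{x1, x2, x3}. ({s, x} \<in> S \<and> {t, x} \<in> Q) \<or> ({s, x} \<in> Q \<and> {t, x} \<in> S)))"
proof (rule conjI[OF three_connectors_beyond_queue_edge[OF assms]], intro allI impI, elim conjE)
  fix x1 x2 x3
  assume X: "x1 \<in> connectors i" "x2 \<in> connectors i" "x3 \<in> connectors i"
    "x1 \<noteq> x2" "x1 \<noteq> x3" "x2 \<noteq> x3"
    and "(pos v2 < pos x1 \<and> pos v2 < pos x2 \<and> pos v2 < pos x3)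
      \<or> (pos x1 < pos v1 \<and> pos x2 < pos v1 \<and> pos x3 < pos v1)"
  then have "(pos t < pos x1 \<and> pos t < pos x2 \<and> pos t < pos x3)
      \<or> (pos x1 < pos s \<and> pos x2 < pos s \<and> pos x3 < pos s)"
    using assms(5-7) by auto
  then show "\<exists>x\<in>{x1, x2, x3}. ({s, x} \<in> S \<and> {t, x} \<in> Q) \<or> ({s, x} \<in> Q \<and> {t, x} \<in> S)"
    by (rule connector_with_mixed_twin_edges[OF assms(1,3,4,6) X])
qed

end
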